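(* Let $L \in K[D]$ with $\operatorname{ord}(L)=d$ and $\operatorname{Sym}_L = S_1 S_2$, where $S_1,S_2$ are homogeneous of degrees $d_1,d_2$, and let $S_0=\gcd(S_1,S_2)$ be homogeneous of degree $d_0$. Then for every partial factorization $F_1\circ F_2$ of $L$ of order $d-d_0$ and of type $(S_1)(S_2)$, there is at most one factorization $L=F_1'\circ F_2'$ of type $(S_1)(S_2)$ which is an extension of $F_1\circ F_2$, i.e. satisfies $\operatorname{ord}(F_i-F_i')<(d-d_0)-(d-d_i)$ for $i=1,2$.
   Context: $K$ is a field with commuting derivations $\partial_1,\dots,\partial_n$, and $K[D]=K[D_1,\dots,D_n]$ is the ring of linear differential operators over $K$: the $D_i$ commute with each other and $D_i\circ a = aD_i+\partial_i(a)$ for $a\in K$. Every $L\in K[D]$ is uniquely $L=\sum_{|J|\le d} a_J D^J$ with $a_J\in K$, $D^J=D_1^{j_1}\cdots D_n^{j_n}$, $|J|=j_1+\dots+j_n$. The order $\operatorname{ord}(L)$ is the largest $|J|$ with $a_J\neq 0$, and $\operatorname{ord}(0)=-\infty$. The symbol $\operatorname{Sym}_L\in K[X_1,\dots,X_n]$ is the homogeneous polynomial $\sum_{|J|=\operatorname{ord}L} a_J X^J$. If $\operatorname{Sym}_L=S_1\cdots S_k$ with homogeneous $S_i$, a factorization of type $(S_1)\cdots(S_k)$ is an equality $L=F_1\circ\cdots\circ F_k$ with $\operatorname{Sym}_{F_i}=S_i$. For $t\in\{0,\dots,\operatorname{ord}L\}$, a partial factorization of $L$ of order $t$ is a composition $F_1\circ\cdots\circ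 F_k$ with $\operatorname{ord}(L-F_1\circ\cdots\circ F_k)<t$; it is of type $(S_1)\cdots(S_k)$ if $\operatorname{Sym}_{F_i}=S_i$ for all $i$. If $d_i=\deg S_i$, $d=\operatorname{ord}L$, and $F_1\circ\cdots\circ F_k$, $F_1'\circ\cdots\circ F_k'$ are partial factorizations of orders $t$ and $t'<t$, then the latter is an extension of the former if $\operatorname{ord}(F_i-F_i')<t-(d-d_i)$ for all $i$. A (complete) factorization is a partial factorization of order $0$. *)

theory Defs
  imports "HOL-Library.Poly_Mapping" "HOL-Library.Extended_Real"
begin

text \<open>Variables / derivations are indexed by a finite linearly ordered type 'v
  (so n = CARD('v)).
  Both differential operators L = sum a_J D^J and polynomials in K[X_1..X_n]
  are represented by their coefficient maps poly_mappings.
  Addition/subtraction of operators and of polynomials is the library addition;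
  the (commutative) product of polynomials is the library product of poly_mapping
  (convolution), while composition of operators is op_comp below.\<close>

type_synonym ('v, 'a) mpoly = "('v \<Rightarrow>\<^sub>0 nat) \<Rightarrow>\<^sub>0 'a"

definition mdeg :: "('v \<Rightarrow>\<^sub>0 nat) \<Rightarrow> nat" where
  "mdeg J = (\<Sum>i\<in>Poly_Mapping.keys J. Poly_Mapping.lookup J i)"

definition is_derivation :: "('a::field \<Rightarrow> 'a) \<Rightarrow> bool" where
  "is_derivation \<delta> \<longleftrightarrow> (\<forall>a b. \<delta> (a + b) = \<delta> a + \<delta> b \<and> \<delta> (a * b) = a * \<delta> b + \<delta> a * b)"

definition commuting_derivations :: "('v \<Rightarrow> 'a::field \<Rightarrow> 'a) \<Rightarrow> bool" where
  "commuting_derivations der \<longleftrightarrow>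
     (\<forall>i. is_derivation (der i)) \<and> (\<forall>i j a. der i (der j a) = der j (der i a))"

definition dpow :: "('v::{finite,linorder} \<Rightarrow> 'a \<Rightarrow> 'a) \<Rightarrow> ('v \<Rightarrow>\<^sub>0 nat) \<Rightarrow> 'a \<Rightarrow> 'a" where
  "dpow der I a = foldr (\<lambda>i. (der i ^^ Poly_Mapping.lookup I i)) (sorted_list_of_set UNIV) a"

definition mchoose :: "('v::finite \<Rightarrow>\<^sub>0 nat) \<Rightarrow> ('v \<Rightarrow>\<^sub>0 nat) \<Rightarrow> nat" where
  "mchoose J I = (\<Prod>i\<in>UNIV. Poly_Mapping.lookup J i choose Poly_Mapping.lookup I i)"

text \<open>Composition in K[D]:  (a D^J) o (b D^K) = sum_{I \<le> J} a * C(J,I) * der^I(b) D^(J-I+K),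
  which is the Leibniz rule coming from D_i o b = b D_i + der_i(b).\<close>
definition op_comp :: "('v::{finite,linorder} \<Rightarrow> 'a::field \<Rightarrow> 'a)
    \<Rightarrow> ('v, 'a) mpoly \<Rightarrow> ('v, 'a) mpoly \<Rightarrow> ('v, 'a) mpoly" where
  "op_comp der L M =
     (\<Sum>J\<in>Poly_Mapping.keys L. \<Sum>K\<in>Poly_Mapping.keys M. \<Sum>I\<in>{I. \<forall>i. Poly_Mapping.lookup I i \<le> Poly_Mapping.lookup J i}.
        Poly_Mapping.single (J - I + K)
          (Poly_Mapping.lookup L J * of_nat (mchoose J I) * dpow der I (Poly_Mapping.lookup M K)))"

definition ord :: "('v, 'a::zero) mpoly \<Rightarrow> ereal" where
  "ord L = (if L = 0 then -\<infinity> else ereal (real (Max (mdeg ` Poly_Mapping.keys L))))"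

definition Sym :: "('v, 'a::zero) mpoly \<Rightarrow> ('v, 'a) mpoly" where
  "Sym L = Abs_poly_mapping (\<lambda>J. if ereal (real (mdeg J)) = ord L then Poly_Mapping.lookup L J else 0)"

definition homogeneous :: "('v, 'a::zero) mpoly \<Rightarrow> nat \<Rightarrow> bool" where
  "homogeneous P k \<longleftrightarrow> P \<noteq> 0 \<and> (\<forall>J\<in>Poly_Mapping.keys P. mdeg J = k)"

definition is_gcd :: "('v::linorder, 'a::field) mpoly \<Rightarrow> ('v, 'a) mpoly \<Rightarrow> ('v, 'a) mpoly \<Rightarrow> bool" where
  "is_gcd S0 S1 S2 \<longleftrightarrow> S0 dvd S1 \<and> S0 dvd S2 \<and> (\<forall>T. T dvd S1 \<and> T dvd S2 \<longrightarrow> T dvd S0)"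

end

theory Submission
  imports Defs "HOL-Computational_Algebra.Factorial_Ring" "HOL-Library.FuncSet"
begin

text \<open>Write \<open>G\<^sub>i = H\<^sub>i + P\<^sub>i\<close>. Composition is bilinear, so two factorizations of \<open>L\<close>
  give \<open>P\<^sub>1 \<circ> G\<^sub>2 = - H\<^sub>1 \<circ> P\<^sub>2\<close>, and symbols are multiplicative. Writing
  \<open>S\<^sub>1 = S\<^sub>0 A\<close> and \<open>S\<^sub>2 = S\<^sub>0 B\<close> with \<open>A\<close>, \<open>B\<close> coprime, if \<open>P\<^sub>1 \<noteq> 0\<close> this
  yields \<open>Sym P\<^sub>1 \<cdot> B = - A \<cdot> Sym P\<^sub>2\<close>, so \<open>A\<close> divides \<open>Sym P\<^sub>1\<close>; this is impossible
  because \<open>ord P\<^sub>1 < d\<^sub>1 - d\<^sub>0 = deg A\<close>. Hence \<open>P\<^sub>1 = 0\<close>, and then \<open>H\<^sub>1 \<circ> P\<^sub>2 = 0\<close>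
  forces \<open>P\<^sub>2 = 0\<close>.

  The divisibility step needs that \<open>K[X\<^sub>1, \<dots>, X\<^sub>n]\<close> is factorial. Irreducible polynomials are
  shown to be prime by induction on the set of variables, adjoining one variable \<open>x\<close> at a time:
  irreducibles free of \<open>x\<close> are handled by Gauss's lemma, and for the others one argues with
  pseudo-division in the ideal they generate over the field of fractions in the other
  variables.\<close>

section \<open>Weighted degree and top homogeneous part\<close>

definition wdeg :: "('k \<Rightarrow> nat) \<Rightarrow> ('k \<Rightarrow>\<^sub>0 'a::zero) \<Rightarrow> nat" where
  "wdeg w p = (if p = 0 then 0 else Max (w ` Poly_Mapping.keys p))"

definition wtop :: "('k \<Rightarrow> nat) \<Rightarrow> ('k \<Rightarrow>\<^sub>0 'a::zero) \<Rightarrow> ('k \<Rightarrow>\<^sub>0 'a)" where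
  "wtop w p = Poly_Mapping.mapp (\<lambda>J c. if w J = wdeg w p then c else 0) p"

lemma wdeg_0 [simp]: "wdeg w 0 = 0"
  by (simp add: wdeg_def)

lemma le_wdeg: "J \<in> Poly_Mapping.keys p \<Longrightarrow> w J \<le> wdeg w p"
  unfolding wdeg_def by (cases "p = 0") auto

lemma wdeg_attained:
  assumes "p \<noteq> 0"
  obtains J where "J \<in> Poly_Mapping.keys p" "w J = wdeg w p"
proof -
  have "Max (w ` Poly_Mapping.keys p) \<in> w ` Poly_Mapping.keys p"
    using assms by (intro Max_in) auto
  then show thesis
    using that assms unfolding wdeg_def by (auto simp del: Max_in)
qed

lemma wdeg_eqI:
  assumes "J \<in> Poly_Mapping.keys p" "w J = n" "\<And>K. K \<in> Poly_Mapping.keys p \<Longrightarrow> w K \<le> n"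
  shows "wdeg w p = n"
proof -
  from assms(1) have "p \<noteq> 0" by auto
  then obtain K where "K \<in> Poly_Mapping.keys p" "w K = wdeg w p"
    by (rule wdeg_attained)
  with assms le_wdeg[OF assms(1), of w] show ?thesis
    by (metis le_antisym)
qed

lemma wdeg_less:
  assumes "p \<noteq> 0" "\<And>K. K \<in> Poly_Mapping.keys p \<Longrightarrow> w K < n"
  shows "wdeg w p < n"
proof -
  obtain J where "J \<in> Poly_Mapping.keys p" "w J = wdeg w p"
    using assms(1) by (rule wdeg_attained)
  with assms(2)[of J] show ?thesis by simp
qed

lemma wdeg_eq_0_iff: "wdeg w p = 0 \<longleftrightarrow> (\<forall>K\<in>Poly_Mapping.keys p. w K = 0)"
proof
  show "\<forall>K\<in>Poly_Mapping.keys p. w K = 0" if "wdeg w p = 0"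
    using that le_wdeg[of _ p w] by fastforce
  show "wdeg w p = 0" if "\<forall>K\<in>Poly_Mapping.keys p. w K = 0"
    using that wdeg_attained[of p w] by (cases "p = 0") auto
qed

lemma lookup_wtop:
  "Poly_Mapping.lookup (wtop w p) J = (if w J = wdeg w p then Poly_Mapping.lookup p J else 0)"
  by (auto simp add: wtop_def lookup_mapp when_def in_keys_iff)

lemma in_keys_wtop_iff:
  "J \<in> Poly_Mapping.keys (wtop w p) \<longleftrightarrow> J \<in> Poly_Mapping.keys p \<and> w J = wdeg w p"
  by (auto simp add: in_keys_iff lookup_wtop)

lemma wtop_0 [simp]: "wtop w 0 = 0"
  by (rule poly_mapping_eqI) (simp add: lookup_wtop)

lemma wtop_eq_0_iff [simp]: "wtop w p = 0 \<longleftrightarrow> p = 0"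
proof
  assume "wtop w p = 0"
  show "p = 0"
  proof (rule ccontr)
    assume "p \<noteq> 0"
    then obtain J where "J \<in> Poly_Mapping.keys p" "w J = wdeg w p"
      by (rule wdeg_attained)
    then show False
      using \<open>wtop w p = 0\<close> in_keys_wtop_iff[of J w p] by simp
  qed
qed simp

lemma wdeg_wtop [simp]: "wdeg w (wtop w p) = wdeg w p"
proof (cases "p = 0")
  case False
  then obtain J where "J \<in> Poly_Mapping.keys p" "w J = wdeg w p"
    by (rule wdeg_attained)
  then show ?thesis
    by (intro wdeg_eqI[of J]) (auto simp: in_keys_wtop_iff)
qed simp

lemma wtop_uminus: "wtop w (- p) = - wtop w (p :: 'k \<Rightarrow>\<^sub>0 'a::ab_group_add)"
  by (intro poly_mapping_eqI) (simp add: lookup_wtop wdeg_def)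

lemma wtop_eq_self:
  "(\<And>K. K \<in> Poly_Mapping.keys p \<Longrightarrow> w K = wdeg w p) \<Longrightarrow> wtop w p = p"
proof (rule poly_mapping_eqI)
  fix K
  assume "\<And>K. K \<in> Poly_Mapping.keys p \<Longrightarrow> w K = wdeg w p"
  then show "Poly_Mapping.lookup (wtop w p) K = Poly_Mapping.lookup p K"
    by (cases "K \<in> Poly_Mapping.keys p") (auto simp: lookup_wtop in_keys_iff)
qed

lemma wtop_eq_self_if_wdeg_0: "wdeg w p = 0 \<Longrightarrow> wtop w p = p"
  by (rule wtop_eq_self) (simp add: wdeg_eq_0_iff)

lemma wdeg_below_wtop:
  "J \<in> Poly_Mapping.keys (p - wtop w p) \<Longrightarrow> w J < wdeg w p"
proof -
  assume "J \<in> Poly_Mapping.keys (p - wtop w p)"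
  then have "w J \<noteq> wdeg w p" "J \<in> Poly_Mapping.keys p"
    by (auto simp: in_keys_iff lookup_minus lookup_wtop split: if_splits)
  then show ?thesis
    using le_wdeg[of J p w] by simp
qed

lemma wdeg_diff_below_wtop:
  "p \<noteq> wtop w (p :: 'k \<Rightarrow>\<^sub>0 'a::ab_group_add) \<Longrightarrow> wdeg w (p - wtop w p) < wdeg w p"
  by (rule wdeg_less) (simp_all add: wdeg_below_wtop)

lemma
  fixes p e :: "'k \<Rightarrow>\<^sub>0 'a::ab_group_add"
  assumes "p \<noteq> 0" "\<And>K. K \<in> Poly_Mapping.keys e \<Longrightarrow> w K < wdeg w p"
  shows wdeg_add_lower: "wdeg w (p + e) = wdeg w p"
    and wtop_add_lower: "wtop w (p + e) = wtop w p"
proof -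
  obtain J where J: "J \<in> Poly_Mapping.keys p" "w J = wdeg w p"
    using assms(1) by (rule wdeg_attained)
  have e: "Poly_Mapping.lookup e K = 0" if "w K = wdeg w p" for K
    using assms(2)[of K] that by (auto simp: in_keys_iff)
  have "J \<in> Poly_Mapping.keys (p + e)"
    using J e by (simp add: in_keys_iff lookup_add)
  moreover have "w K \<le> wdeg w p" if "K \<in> Poly_Mapping.keys (p + e)" for K
  proof -
    have "K \<in> Poly_Mapping.keys p \<or> K \<in> Poly_Mapping.keys e"
      using that keys_add[of p e] by blast
    then show ?thesis
      using assms(2)[of K] le_wdeg[of K p w] by linarith
  qed
  ultimately show deg: "wdeg w (p + e) = wdeg w p"
    using J(2) by (blast intro: wdeg_eqI)
  show "wtop w (p + e) = wtop w p"
  proof (rule poly_mapping_eqI)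
    fix K
    show "Poly_Mapping.lookup (wtop w (p + e)) K = Poly_Mapping.lookup (wtop w p) K"
      using e[of K] by (simp add: lookup_wtop deg lookup_add)
  qed
qed

lemma wdeg_diff_same_wtop:
  fixes p q :: "'k \<Rightarrow>\<^sub>0 'a::ab_group_add"
  assumes "wdeg w p = n" "wdeg w q = n" "wtop w p = wtop w q" "p \<noteq> q"
  shows "wdeg w (p - q) < n"
proof (rule wdeg_less)
  fix K assume K: "K \<in> Poly_Mapping.keys (p - q)"
  then have "Poly_Mapping.lookup p K \<noteq> Poly_Mapping.lookup q K"
    by (simp add: in_keys_iff lookup_minus)
  then have "w K \<noteq> n"
    using assms(1-3) lookup_wtop[of w p K] lookup_wtop[of w q K] by auto
  moreover have "w K \<le> n"
    using K keys_diff[of p q] le_wdeg[of K p w] le_wdeg[of K q w] assms(1,2) by auto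
  ultimately show "w K < n" by simp
qed (use assms(4) in simp)

lemma
  fixes p q :: "'k::{ordered_cancel_comm_monoid_add,linorder} \<Rightarrow>\<^sub>0 'a::idom"
  assumes add: "\<And>a b. w (a + b) = w a + w b" and "p \<noteq> 0" "q \<noteq> 0"
  shows wdeg_mult: "wdeg w (p * q) = wdeg w p + wdeg w q"
    and wtop_mult: "wtop w (p * q) = wtop w p * wtop w q"
proof -
  define tp tq where "tp = wtop w p" and "tq = wtop w q"
  define e where "e = tp * (q - tq) + (p - tp) * q"
  have pq: "p * q = tp * tq + e"
    unfolding e_def by (simp add: algebra_simps)
  have top_nz: "tp * tq \<noteq> 0"
    using assms by (simp add: tp_def tq_def)
  have top_keys: "w K = wdeg w p + wdeg w q" if K: "K \<in> Poly_Mapping.keys (tp * tq)" for K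
  proof -
    obtain a b where "K = a + b" "a \<in> Poly_Mapping.keys tp" "b \<in> Poly_Mapping.keys tq"
      using K keys_mult[of tp tq] by blast
    then show ?thesis
      using add[of a b] by (simp add: tp_def tq_def in_keys_wtop_iff)
  qed
  have top_deg: "wdeg w (tp * tq) = wdeg w p + wdeg w q"
    using top_nz by (rule wdeg_attained[where w = w]) (use top_keys in simp)
  have lower_keys: "w K < wdeg w (tp * tq)" if "K \<in> Poly_Mapping.keys e" for K
  proof -
    from that have "K \<in> Poly_Mapping.keys (tp * (q - tq)) \<or> K \<in> Poly_Mapping.keys ((p - tp) * q)"
      using keys_add[of "tp * (q - tq)" "(p - tp) * q"] unfolding e_def by blast
    then show ?thesis
    proof
      assume "K \<in> Poly_Mapping.keys (tp * (q - tq))"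
      then obtain a b where "K = a + b" "a \<in> Poly_Mapping.keys tp" "b \<in> Poly_Mapping.keys (q - tq)"
        using keys_mult[of tp "q - tq"] by blast
      then show ?thesis
        using wdeg_below_wtop[of b q w] add[of a b] top_deg
        by (simp add: tp_def tq_def in_keys_wtop_iff)
    next
      assume "K \<in> Poly_Mapping.keys ((p - tp) * q)"
      then obtain a b where "K = a + b" "a \<in> Poly_Mapping.keys (p - tp)" "b \<in> Poly_Mapping.keys q"
        using keys_mult[of "p - tp" q] by blast
      then show ?thesis
        using wdeg_below_wtop[of a p w] le_wdeg[of b q w] add[of a b] top_deg
        by (simp add: tp_def)
    qed
  qed
  have "wtop w (tp * tq) = tp * tq"
    using top_keys top_deg by (intro wtop_eq_self) simp
  then show "wdeg w (p * q) = wdeg w p + wdeg w q" "wtop w (p * q) = wtop w p * wtop w q"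
    using wdeg_add_lower[OF top_nz lower_keys] wtop_add_lower[OF top_nz lower_keys] top_deg
    unfolding pq tp_def tq_def by simp_all
qed

lemma wdeg_unit:
  fixes u :: "'k::{ordered_cancel_comm_monoid_add,linorder} \<Rightarrow>\<^sub>0 'a::idom"
  assumes add: "\<And>a b. w (a + b) = w a + w b" and "u dvd 1"
  shows "wdeg w u = 0"
proof -
  obtain v where v: "1 = u * v"
    using assms(2) by (rule dvdE)
  have "w 0 = 0"
    using add[of 0 0] by simp
  then have "wdeg w (u * v) = 0"
    by (simp flip: v add: wdeg_eq_0_iff)
  moreover have "u \<noteq> 0" "v \<noteq> 0"
    using v by auto
  ultimately show ?thesis
    using wdeg_mult[OF add, of u v] by simp
qed

lemma wdeg_dvd:
  fixes p q :: "'k::{ordered_cancel_comm_monoid_add,linorder} \<Rightarrow>\<^sub>0 'a::idom"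
  assumes "\<And>a b. w (a + b) = w a + w b" "p dvd q" "q \<noteq> 0"
  shows "wdeg w p \<le> wdeg w q"
proof -
  obtain r where "q = p * r"
    using assms(2) by (rule dvdE)
  with assms(3) show ?thesis
    using wdeg_mult[OF assms(1), of p r] by simp
qed

section \<open>Degrees and variables of multivariate polynomials\<close>

lemma mdeg_eq_sum: "mdeg (J :: 'v::finite \<Rightarrow>\<^sub>0 nat) = (\<Sum>i\<in>UNIV. Poly_Mapping.lookup J i)"
  unfolding mdeg_def by (rule sum.mono_neutral_left) (auto simp: in_keys_iff)

lemma mdeg_add: "mdeg (J + K :: 'v::finite \<Rightarrow>\<^sub>0 nat) = mdeg J + mdeg K"
  by (simp add: mdeg_eq_sum lookup_add sum.distrib)

lemma mdeg_eq_0_iff: "mdeg (J :: 'v::finite \<Rightarrow>\<^sub>0 nat) = 0 \<longleftrightarrow> J = 0"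
  by (auto simp: mdeg_eq_sum poly_mapping_eq_iff fun_eq_iff)

abbreviation total_degree :: "('v, 'a::zero) mpoly \<Rightarrow> nat" where
  "total_degree \<equiv> wdeg mdeg"

definition var_deg :: "'v \<Rightarrow> ('v \<Rightarrow>\<^sub>0 nat) \<Rightarrow> nat" where
  "var_deg x J = Poly_Mapping.lookup J x"

lemma var_deg_add: "var_deg x (J + K) = var_deg x J + var_deg x K"
  by (simp add: var_deg_def lookup_add)

abbreviation degree_in :: "'v \<Rightarrow> ('v, 'a::zero) mpoly \<Rightarrow> nat" where
  "degree_in x \<equiv> wdeg (var_deg x)"

lemma total_degree_eq_0_imp_unit:
  fixes p :: "('v::{finite,linorder}, 'a::field) mpoly"
  assumes "p \<noteq> 0" "total_degree p = 0"
  shows "p dvd 1"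
proof -
  have zero: "K = 0" if "K \<in> Poly_Mapping.keys p" for K
    using assms(2) that by (simp add: wdeg_eq_0_iff mdeg_eq_0_iff)
  obtain J where "J \<in> Poly_Mapping.keys p"
    using assms(1) keys_eq_empty[of p] by blast
  then have keys: "Poly_Mapping.keys p = {0}"
    using zero by auto
  define c where "c = Poly_Mapping.lookup p 0"
  have p: "p = Poly_Mapping.single 0 c"
  proof (rule poly_mapping_eqI)
    fix K
    show "Poly_Mapping.lookup p K = Poly_Mapping.lookup (Poly_Mapping.single 0 c) K"
    proof (cases "K = 0")
      case False
      then have "K \<notin> Poly_Mapping.keys p"
        using keys by simp
      with False show ?thesis
        by (simp add: in_keys_iff lookup_single)
    qed (simp add: c_def)
  qed
  have "0 \<in> Poly_Mapping.keys p"
    using keys by simp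
  then have "c \<noteq> 0"
    by (simp add: c_def in_keys_iff)
  have "p * Poly_Mapping.single 0 (inverse c) = Poly_Mapping.single 0 (c * inverse c)"
    by (subst p) (simp add: mult_single)
  also have "\<dots> = 1"
    using \<open>c \<noteq> 0\<close> by simp
  finally show ?thesis
    by (rule dvdI[OF sym])
qed

lemma total_degree_pos:
  fixes p :: "('v::{finite,linorder}, 'a::field) mpoly"
  shows "p \<noteq> 0 \<Longrightarrow> \<not> p dvd 1 \<Longrightarrow> 0 < total_degree p"
  using total_degree_eq_0_imp_unit[of p] by (cases "total_degree p") auto

lemma irreducible_factor_exists:
  fixes c :: "('v::{finite,linorder}, 'a::field) mpoly"
  assumes "c \<noteq> 0" "\<not> c dvd 1"
  obtains p where "irreducible p" "p dvd c"
  using assms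
proof (induction "total_degree c" arbitrary: c thesis rule: less_induct)
  case less
  show ?case
  proof (cases "irreducible c")
    case True
    then show ?thesis
      using less.prems(1)[of c] by simp
  next
    case False
    then obtain a b where ab: "c = a * b" "\<not> a dvd 1" "\<not> b dvd 1"
      using less.prems(2,3) unfolding irreducible_def by blast
    then have "a \<noteq> 0" "b \<noteq> 0"
      using less.prems(2) by auto
    then have "total_degree a < total_degree c"
      using wdeg_mult[OF mdeg_add, of a b] total_degree_pos[of b] ab by simp
    then obtain p where "irreducible p" "p dvd a"
      using less.hyps \<open>a \<noteq> 0\<close> ab(2) by blast
    then show ?thesis
      using less.prems(1) ab(1) by auto
  qed
qed

definition vars :: "('v, 'a::zero) mpoly \<Rightarrow> 'v set" where
  "vars p = (\<Union>J\<in>Poly_Mapping.keys p. Poly_Mapping.keys J)"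

lemma vars_0 [simp]: "vars 0 = {}"
  by (simp add: vars_def)

lemma vars_1 [simp]: "vars (1 :: ('v, 'a::zero_neq_one) mpoly) = {}"
  by (simp add: vars_def)

lemma vars_add_subset: "vars p \<subseteq> V \<Longrightarrow> vars q \<subseteq> V \<Longrightarrow> vars (p + q) \<subseteq> V"
  unfolding vars_def using keys_add[of p q] by blast

lemma vars_diff_subset:
  "vars p \<subseteq> V \<Longrightarrow> vars q \<subseteq> V \<Longrightarrow> vars (p - q :: ('v, 'a::ab_group_add) mpoly) \<subseteq> V"
  unfolding vars_def using keys_diff[of p q] by blast

lemma vars_mult_subset:
  "vars p \<subseteq> V \<Longrightarrow> vars q \<subseteq> V \<Longrightarrow> vars (p * q :: ('v, 'a::semiring_0) mpoly) \<subseteq> V"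
proof (unfold vars_def, intro UN_least)
  fix K assume "(\<Union>J\<in>Poly_Mapping.keys p. Poly_Mapping.keys J) \<subseteq> V"
    "(\<Union>J\<in>Poly_Mapping.keys q. Poly_Mapping.keys J) \<subseteq> V" "K \<in> Poly_Mapping.keys (p * q)"
  moreover obtain a b where "K = a + b" "a \<in> Poly_Mapping.keys p" "b \<in> Poly_Mapping.keys q"
    using \<open>K \<in> Poly_Mapping.keys (p * q)\<close> keys_mult[of p q] by blast
  ultimately show "Poly_Mapping.keys K \<subseteq> V"
    using keys_add[of a b] by blast
qed

lemma vars_power_subset: "vars p \<subseteq> V \<Longrightarrow> vars (p ^ n :: ('v, 'a::semiring_1) mpoly) \<subseteq> V"
  by (induction n) (simp_all add: vars_mult_subset)

lemma vars_wtop: "vars (wtop w p) \<subseteq> vars p"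
  unfolding vars_def by (auto simp: in_keys_wtop_iff)

lemma notin_vars_iff: "x \<notin> vars p \<longleftrightarrow> degree_in x p = 0"
  by (auto simp: vars_def wdeg_eq_0_iff var_deg_def in_keys_iff)

lemma vars_dvd:
  fixes p q :: "('v::{finite,linorder}, 'a::field) mpoly"
  assumes "q dvd p" "p \<noteq> 0"
  shows "vars q \<subseteq> vars p"
proof
  fix x assume "x \<in> vars q"
  obtain r where r: "p = q * r"
    using assms(1) by (rule dvdE)
  then have "q \<noteq> 0" "r \<noteq> 0"
    using assms(2) by auto
  then have "degree_in x p = degree_in x q + degree_in x r"
    using r wdeg_mult[where w = "var_deg x", OF var_deg_add] by simp
  then show "x \<in> vars p"
    using \<open>x \<in> vars q\<close> notin_vars_iff[of x p] notin_vars_iff[of x q] by simp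
qed

definition var_power :: "'v \<Rightarrow> nat \<Rightarrow> ('v, 'a::{zero,one}) mpoly" where
  "var_power x e = Poly_Mapping.single (Poly_Mapping.single x e) 1"

lemma var_power_add:
  "var_power x (a + b) = var_power x a * (var_power x b :: ('v, 'a::semiring_1) mpoly)"
  by (simp add: var_power_def mult_single single_add)

lemma var_power_nonzero [simp]: "(var_power x e :: ('v, 'a::zero_neq_one) mpoly) \<noteq> 0"
  by (simp add: var_power_def flip: keys_eq_empty)

lemma keys_var_power:
  "Poly_Mapping.keys (var_power x e :: ('v, 'a::zero_neq_one) mpoly) = {Poly_Mapping.single x e}"
  by (simp add: var_power_def)

lemma vars_var_power: "vars (var_power x e :: ('v, 'a::zero_neq_one) mpoly) \<subseteq> {x}"
  by (simp add: vars_def keys_var_power)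

lemma degree_in_var_power: "degree_in x (var_power x e :: ('v, 'a::zero_neq_one) mpoly) = e"
  by (rule wdeg_eqI[of "Poly_Mapping.single x e"]) (auto simp: keys_var_power var_deg_def)

lemma wtop_var_power:
  "wtop (var_deg x) (var_power x e :: ('v, 'a::zero_neq_one) mpoly) = var_power x e"
  by (rule wtop_eq_self) (simp add: keys_var_power degree_in_var_power var_deg_def)

lemma sum_single_lookup:
  "(\<Sum>J\<in>Poly_Mapping.keys p. Poly_Mapping.single J (Poly_Mapping.lookup p J)) = p"
  (is "?sum = p")
proof (rule poly_mapping_eqI)
  fix K
  have "Poly_Mapping.lookup ?sum K
      = (\<Sum>J\<in>Poly_Mapping.keys p. if J = K then Poly_Mapping.lookup p J else 0)"
    by (simp add: lookup_sum lookup_single when_def)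
  also have "\<dots> = Poly_Mapping.lookup p K"
    by (simp add: in_keys_iff)
  finally show "Poly_Mapping.lookup ?sum K = Poly_Mapping.lookup p K" .
qed

section \<open>Leading coefficient and pseudo-division with respect to one variable\<close>

text \<open>Viewing \<open>p\<close> as a polynomial in \<open>x\<close> whose coefficients are polynomials in the remaining
  variables, \<open>lcoeff_in x p\<close> is its leading coefficient.\<close>

definition lcoeff_in :: "'v \<Rightarrow> ('v, 'a::comm_monoid_add) mpoly \<Rightarrow> ('v, 'a) mpoly" where
  "lcoeff_in x p = (\<Sum>J\<in>Poly_Mapping.keys (wtop (var_deg x) p).
     Poly_Mapping.single (J - Poly_Mapping.single x (degree_in x p)) (Poly_Mapping.lookup p J))"

lemma lcoeff_in_0 [simp]: "lcoeff_in x 0 = 0"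
  by (simp add: lcoeff_in_def)

lemma wtop_eq_lcoeff_in:
  "wtop (var_deg x) p
    = lcoeff_in x p * (var_power x (degree_in x p) :: ('v, 'a::comm_semiring_1) mpoly)"
proof -
  define d where "d = degree_in x p"
  define T where "T = wtop (var_deg x) p"
  have "lcoeff_in x p * var_power x d
      = (\<Sum>J\<in>Poly_Mapping.keys T.
          Poly_Mapping.single (J - Poly_Mapping.single x d) (Poly_Mapping.lookup p J)
            * Poly_Mapping.single (Poly_Mapping.single x d) 1)"
    unfolding lcoeff_in_def var_power_def T_def d_def by (simp add: sum_distrib_right)
  also have "\<dots> = (\<Sum>J\<in>Poly_Mapping.keys T. Poly_Mapping.single J (Poly_Mapping.lookup T J))"
  proof (rule sum.cong)
    fix J assume J: "J \<in> Poly_Mapping.keys T"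
    then have "Poly_Mapping.lookup J x = d"
      unfolding T_def d_def by (simp add: in_keys_wtop_iff var_deg_def)
    then have "J - Poly_Mapping.single x d + Poly_Mapping.single x d = J"
      by (intro poly_mapping_eqI) (auto simp add: lookup_add lookup_minus lookup_single when_def)
    moreover have "Poly_Mapping.lookup T J = Poly_Mapping.lookup p J"
      using J unfolding T_def by (simp add: in_keys_wtop_iff lookup_wtop)
    ultimately show "Poly_Mapping.single (J - Poly_Mapping.single x d) (Poly_Mapping.lookup p J)
        * Poly_Mapping.single (Poly_Mapping.single x d) 1
        = Poly_Mapping.single J (Poly_Mapping.lookup T J)"
      by (simp add: mult_single)
  qed simp
  also have "\<dots> = T"
    by (rule sum_single_lookup)
  finally show ?thesis
    unfolding T_def d_def by simp
qed

lemma vars_lcoeff_in: "vars (lcoeff_in x p) \<subseteq> vars p - {x}"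
proof
  fix y assume "y \<in> vars (lcoeff_in x p)"
  then obtain J where J: "J \<in> Poly_Mapping.keys (lcoeff_in x p)" "y \<in> Poly_Mapping.keys J"
    by (auto simp: vars_def)
  define d where "d = degree_in x p"
  have "J \<in> (\<Union>K\<in>Poly_Mapping.keys (wtop (var_deg x) p).
      Poly_Mapping.keys
        (Poly_Mapping.single (K - Poly_Mapping.single x d) (Poly_Mapping.lookup p K)))"
    unfolding d_def by (rule subsetD[OF keys_sum J(1)[unfolded lcoeff_in_def]])
  then obtain K where K: "K \<in> Poly_Mapping.keys p" "Poly_Mapping.lookup K x = d"
      "J = K - Poly_Mapping.single x d"
    by (auto simp: in_keys_wtop_iff var_deg_def d_def split: if_splits)
  have "Poly_Mapping.lookup J y = Poly_Mapping.lookup K y - (if x = y then d else 0)"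
    using K(3) by (simp add: lookup_minus lookup_single)
  then show "y \<in> vars p - {x}"
    using J(2) K(1,2) by (auto simp: vars_def in_keys_iff split: if_splits)
qed

lemma vars_lcoeff_in_subset: "vars p \<subseteq> insert x V \<Longrightarrow> vars (lcoeff_in x p) \<subseteq> V"
  using vars_lcoeff_in[of x p] by blast

lemma degree_in_lcoeff_in [simp]: "degree_in x (lcoeff_in x p) = 0"
  using vars_lcoeff_in[of x p] notin_vars_iff[of x "lcoeff_in x p"] by blast

lemma
  fixes p :: "('v::linorder, 'a::idom) mpoly"
  shows lcoeff_in_eq_0_iff [simp]: "lcoeff_in x p = 0 \<longleftrightarrow> p = 0"
    and lcoeff_in_eq_self: "x \<notin> vars p \<Longrightarrow> lcoeff_in x p = p"
proof -
  show "lcoeff_in x p = 0 \<longleftrightarrow> p = 0"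
    using wtop_eq_lcoeff_in[of x p] wtop_eq_0_iff[of "var_deg x" p] by auto
  show "lcoeff_in x p = p" if "x \<notin> vars p"
    using that wtop_eq_lcoeff_in[of x p] wtop_eq_self_if_wdeg_0[of "var_deg x" p]
    by (simp add: notin_vars_iff var_power_def)
qed

lemma lcoeff_in_mult:
  fixes p q :: "('v::linorder, 'a::idom) mpoly"
  shows "lcoeff_in x (p * q) = lcoeff_in x p * lcoeff_in x q"
proof (cases "p = 0 \<or> q = 0")
  case False
  note deg = wdeg_mult[where w = "var_deg x", OF var_deg_add]
    and top = wtop_mult[where w = "var_deg x", OF var_deg_add]
  have "lcoeff_in x (p * q) * var_power x (degree_in x p + degree_in x q)
      = wtop (var_deg x) (p * q)"
    using wtop_eq_lcoeff_in[of x "p * q"] deg[of p q] False by simp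
  also have "\<dots> = (lcoeff_in x p * lcoeff_in x q) * var_power x (degree_in x p + degree_in x q)"
    using top[of p q] False wtop_eq_lcoeff_in[of x p] wtop_eq_lcoeff_in[of x q]
    by (simp add: var_power_add algebra_simps)
  finally show ?thesis
    by simp
qed auto

lemma degree_in_cancel_leading_term:
  fixes r f :: "('v::linorder, 'a::idom) mpoly"
  assumes "r \<noteq> 0" "f \<noteq> 0" "degree_in x r \<le> degree_in x f"
    and m: "m = lcoeff_in x f * var_power x (degree_in x f - degree_in x r)"
    and "lcoeff_in x r * f \<noteq> m * r"
  shows "degree_in x (lcoeff_in x r * f - m * r) < degree_in x f"
proof (rule wdeg_diff_same_wtop)
  note deg = wdeg_mult[where w = "var_deg x", OF var_deg_add]
    and top = wtop_mult[where w = "var_deg x", OF var_deg_add]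
  have nz: "lcoeff_in x r \<noteq> 0" "lcoeff_in x f \<noteq> 0" "m \<noteq> 0"
    using assms(1,2) by (simp_all add: m)
  have m_top: "degree_in x m = degree_in x f - degree_in x r" "wtop (var_deg x) m = m"
    using deg[OF nz(2) var_power_nonzero] top[OF nz(2) var_power_nonzero]
    by (simp_all add: m degree_in_var_power wtop_var_power wtop_eq_self_if_wdeg_0)
  show "degree_in x (lcoeff_in x r * f) = degree_in x f"
    using deg[OF nz(1) assms(2)] by simp
  show "degree_in x (m * r) = degree_in x f"
    using deg[OF nz(3) assms(1)] m_top(1) assms(3) by simp
  show "wtop (var_deg x) (lcoeff_in x r * f) = wtop (var_deg x) (m * r)"
    using top[OF nz(1) assms(2)] top[OF nz(3) assms(1)] m_top(2) assms(3)
      wtop_eq_lcoeff_in[of x f] wtop_eq_lcoeff_in[of x r]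
    by (simp add: wtop_eq_self_if_wdeg_0 m var_power_add[symmetric] algebra_simps)
qed (use assms(5) in simp)

lemma pseudo_division_in:
  fixes r :: "('v::linorder, 'a::idom) mpoly"
  assumes "r \<noteq> 0" "x \<in> W" "vars r \<subseteq> W" "vars f \<subseteq> W"
  shows "\<exists>k q s. lcoeff_in x r ^ k * f = q * r + s \<and> (s = 0 \<or> degree_in x s < degree_in x r)
           \<and> vars q \<subseteq> W \<and> vars s \<subseteq> W"
  using assms(4)
proof (induction "degree_in x f" arbitrary: f rule: less_induct)
  case less
  show ?case
  proof (cases "f = 0 \<or> degree_in x f < degree_in x r")
    case True
    then show ?thesis
      using less.prems by (intro exI[of _ 0] exI[of _ 0] exI[of _ f]) auto
  next
    case False
    define m where "m = lcoeff_in x f * var_power x (degree_in x f - degree_in x r)"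
    define g where "g = lcoeff_in x r * f - m * r"
    have vars_lc: "vars (lcoeff_in x h) \<subseteq> W" if "vars h \<subseteq> W" for h
      using that vars_lcoeff_in[of x h] by blast
    have vars_m: "vars m \<subseteq> W"
      unfolding m_def using vars_lc[OF less.prems] vars_var_power[of x] assms(2)
      by (intro vars_mult_subset) auto
    show ?thesis
    proof (cases "g = 0")
      case True
      then have "lcoeff_in x r ^ 1 * f = m * r + 0"
        by (simp add: g_def)
      then show ?thesis
        using vars_m by (intro exI[of _ 1] exI[of _ m] exI[of _ 0]) simp
    next
      case False
      then have "degree_in x g < degree_in x f"
        using \<open>r \<noteq> 0\<close> \<open>\<not> (f = 0 \<or> _)\<close> unfolding g_def
        by (intro degree_in_cancel_leading_term[OF _ _ _ m_def]) auto
      moreover have "vars g \<subseteq> W"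
        unfolding g_def using vars_lc[OF assms(3)] less.prems vars_m assms(3)
        by (intro vars_diff_subset vars_mult_subset)
      ultimately obtain k q s where qs: "lcoeff_in x r ^ k * g = q * r + s"
          "s = 0 \<or> degree_in x s < degree_in x r" "vars q \<subseteq> W" "vars s \<subseteq> W"
        using less.hyps by blast
      have "lcoeff_in x r ^ Suc k * f = (q + lcoeff_in x r ^ k * m) * r + s"
        using qs(1) unfolding g_def by (simp add: algebra_simps)
      moreover have "vars (q + lcoeff_in x r ^ k * m) \<subseteq> W"
        using qs(3) vars_power_subset[OF vars_lc[OF assms(3)]] vars_m
        by (intro vars_add_subset vars_mult_subset)
      ultimately show ?thesis
        using qs(2,4) by blast
    qed
  qed
qed

section \<open>Irreducible polynomials are prime\<close>

text \<open>Irreducibility is taken in the full polynomial ring; since divisors of a nonzero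
  polynomial use only its variables (\<open>vars_dvd\<close>), this agrees with irreducibility in
  \<open>polys_in V\<close>.\<close>

definition irreducibles_prime_in :: "('v::{finite,linorder}, 'a::field) mpoly set \<Rightarrow> bool" where
  "irreducibles_prime_in R \<longleftrightarrow>
     (\<forall>p\<in>R. \<forall>g\<in>R. \<forall>h\<in>R. irreducible p \<longrightarrow> p dvd g * h \<longrightarrow> p dvd g \<or> p dvd h)"

abbreviation polys_in :: "'v set \<Rightarrow> ('v, 'a::zero) mpoly set" where
  "polys_in V \<equiv> {p. vars p \<subseteq> V}"

lemma irreducibles_prime_inD:
  "irreducibles_prime_in R \<Longrightarrow> p \<in> R \<Longrightarrow> g \<in> R \<Longrightarrow> h \<in> R \<Longrightarrow> irreducible p \<Longrightarrow> p dvd g * h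
    \<Longrightarrow> p dvd g \<or> p dvd h"
  unfolding irreducibles_prime_in_def by blast

lemma irreducible_factor_in_vars:
  fixes c :: "('v::{finite,linorder}, 'a::field) mpoly"
  assumes "c \<noteq> 0" "\<not> c dvd 1"
  obtains p c' where "irreducible p" "c = p * c'" "vars p \<subseteq> vars c" "vars c' \<subseteq> vars c"
    "total_degree c' < total_degree c"
proof -
  obtain p where p: "irreducible p" "p dvd c"
    using irreducible_factor_exists[OF assms] .
  obtain c' where c': "c = p * c'"
    using p(2) by (rule dvdE)
  then have "p \<noteq> 0" "c' \<noteq> 0"
    using assms(1) by auto
  then have "total_degree c = total_degree p + total_degree c'"
    using c' wdeg_mult[OF mdeg_add] by simp
  moreover have "0 < total_degree p"
    using total_degree_pos[OF \<open>p \<noteq> 0\<close> irreducible_not_unit[OF p(1)]] .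
  ultimately show thesis
    using that[OF p(1) c'] vars_dvd[OF p(2) assms(1)] vars_dvd[of c' c] c' assms(1) by simp
qed

lemma dvd_lcoeff_in_mult:
  fixes p :: "('v::{finite,linorder}, 'a::field) mpoly"
  assumes prime_V: "irreducibles_prime_in (polys_in V :: ('v, 'a) mpoly set)" and "x \<notin> V"
    and p: "irreducible p" "vars p \<subseteq> V"
    and "vars f \<subseteq> insert x V" "vars t \<subseteq> insert x V" "p dvd f * t"
  shows "p dvd lcoeff_in x f \<or> p dvd lcoeff_in x t"
proof -
  obtain z where "f * t = p * z"
    using assms(7) by (rule dvdE)
  moreover have "lcoeff_in x p = p"
    using p(2) \<open>x \<notin> V\<close> by (intro lcoeff_in_eq_self) blast
  ultimately have "lcoeff_in x f * lcoeff_in x t = p * lcoeff_in x z"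
    by (metis lcoeff_in_mult)
  then show ?thesis
    using irreducibles_prime_inD[OF prime_V _ _ _ p(1)] p(2) assms(5,6)
    by (simp add: vars_lcoeff_in_subset)
qed

text \<open>Gauss's lemma. If \<open>p\<close> divides the leading coefficient of a factor, it divides the top
  part in \<open>x\<close> of that factor, which can then be removed.\<close>

lemma gauss_lemma_in:
  fixes p :: "('v::{finite,linorder}, 'a::field) mpoly"
  assumes prime_V: "irreducibles_prime_in (polys_in V :: ('v, 'a) mpoly set)" and "x \<notin> V"
    and p: "irreducible p" "vars p \<subseteq> V"
  shows "vars f \<subseteq> insert x V \<Longrightarrow> vars t \<subseteq> insert x V \<Longrightarrow> p dvd f * t \<Longrightarrow> p dvd f \<or> p dvd t"
proof (induction "degree_in x f + degree_in x t" arbitrary: f t rule: less_induct)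
  case less
  have "p dvd a \<or> p dvd b"
    if "p dvd lcoeff_in x a" and ab: "a = f \<and> b = t \<or> a = t \<and> b = f" for a b
  proof -
    define a' where "a' = a - wtop (var_deg x) a"
    have top: "p dvd wtop (var_deg x) a"
      using that(1) wtop_eq_lcoeff_in[of x a] by simp
    have "p dvd a * b"
      using ab less.prems(3) by (auto simp: mult.commute)
    then have "p dvd a' * b"
      using top unfolding a'_def by (simp add: left_diff_distrib dvd_diff)
    show ?thesis
    proof (cases "a' = 0")
      case True
      then show ?thesis
        using top by (simp add: a'_def)
    next
      case False
      then have "degree_in x a' < degree_in x a"
        unfolding a'_def by (intro wdeg_diff_below_wtop) simp
      moreover have "vars a \<subseteq> insert x V" "vars b \<subseteq> insert x V"
        using ab less.prems(1,2) by auto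
      moreover from this(1) have "vars a' \<subseteq> insert x V"
        unfolding a'_def by (intro vars_diff_subset order_trans[OF vars_wtop])
      ultimately have "p dvd a' \<or> p dvd b"
        using less.hyps[of a' b] ab \<open>p dvd a' * b\<close> by auto
      then show ?thesis
        using top unfolding a'_def by (metis diff_add_cancel dvd_add)
    qed
  qed
  then show ?case
    using dvd_lcoeff_in_mult[OF prime_V \<open>x \<notin> V\<close> p less.prems] by blast
qed

lemma dvd_mult_unit_cancel:
  fixes a b c :: "'a::comm_semiring_1"
  assumes "c dvd 1" "a dvd c * b"
  shows "a dvd b"
proof -
  obtain c' where "1 = c * c'"
    using assms(1) by (rule dvdE)
  then have "b = c' * (c * b)"
    by (simp add: algebra_simps)
  moreover have "a dvd c' * (c * b)"
    using assms(2) by (rule dvd_mult)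
  ultimately show ?thesis
    by metis
qed

lemma unit_if_dvd_irreducible_without_var:
  fixes f :: "('v::linorder, 'a::idom) mpoly"
  assumes "irreducible f" "p dvd f" "x \<in> vars f" "x \<notin> vars p"
  shows "p dvd 1"
proof (rule ccontr)
  assume "\<not> p dvd 1"
  obtain u where u: "f = p * u"
    using assms(2) by (rule dvdE)
  then have "p \<noteq> 0" "u \<noteq> 0" "u dvd 1"
    using assms(1) irreducibleD[OF assms(1) u] \<open>\<not> p dvd 1\<close> by auto
  then have "degree_in x f = 0"
    using u wdeg_mult[where w = "var_deg x", OF var_deg_add, of p u]
      wdeg_unit[where w = "var_deg x", OF var_deg_add] assms(4) notin_vars_iff[of x p] by simp
  then show False
    using assms(3) notin_vars_iff[of x f] by blast
qed

lemma irreducible_dvd_mult_cancel_in: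
  fixes f :: "('v::{finite,linorder}, 'a::field) mpoly"
  assumes prime_V: "irreducibles_prime_in (polys_in V :: ('v, 'a) mpoly set)" and "x \<notin> V"
    and f: "irreducible f" "vars f \<subseteq> insert x V" "x \<in> vars f"
  shows "vars c \<subseteq> V \<Longrightarrow> c \<noteq> 0 \<Longrightarrow> vars h \<subseteq> insert x V \<Longrightarrow> f dvd c * h \<Longrightarrow> f dvd h"
proof (induction "total_degree c" arbitrary: c rule: less_induct)
  case less
  show ?case
  proof (cases "c dvd 1 \<or> h = 0")
    case True
    then show ?thesis
      using dvd_mult_unit_cancel less.prems(4) by blast
  next
    case False
    then have "\<not> c dvd 1"
      by simp
    obtain p c' where p: "irreducible p" "c = p * c'" "vars p \<subseteq> vars c" "vars c' \<subseteq> vars c"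
        and smaller: "total_degree c' < total_degree c"
      using less.prems(2) \<open>\<not> c dvd 1\<close> by (rule irreducible_factor_in_vars)
    have "vars p \<subseteq> V" "vars c' \<subseteq> V" "c' \<noteq> 0"
      using p(2-4) less.prems(1,2) by auto
    obtain t where t: "c * h = f * t"
      using less.prems(4) by (rule dvdE)
    have "t dvd c * h"
      using t by simp
    moreover have "c * h \<noteq> 0"
      using False less.prems(2) by simp
    ultimately have "vars t \<subseteq> vars (c * h)"
      by (rule vars_dvd)
    also have "\<dots> \<subseteq> insert x V"
      using less.prems(1,3) by (intro vars_mult_subset) auto
    moreover have "f * t = p * (c' * h)"
      using t p(2) by (simp add: mult.assoc)
    ultimately have "p dvd f \<or> p dvd t"
      using gauss_lemma_in[OF prime_V \<open>x \<notin> V\<close> p(1) \<open>vars p \<subseteq> V\<close> f(2)] by simp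
    moreover have "\<not> p dvd f"
      using unit_if_dvd_irreducible_without_var[OF f(1) _ f(3)] irreducible_not_unit[OF p(1)]
        \<open>vars p \<subseteq> V\<close> \<open>x \<notin> V\<close> by blast
    ultimately obtain t' where "t = p * t'"
      by (blast elim: dvdE)
    then have "p * (c' * h) = p * (f * t')"
      using t p(2) by (simp add: algebra_simps)
    then have "f dvd c' * h"
      using p(1) by auto
    then show ?thesis
      using less.hyps[OF smaller \<open>vars c' \<subseteq> V\<close> \<open>c' \<noteq> 0\<close> less.prems(3)] by blast
  qed
qed

text \<open>The ideal generated by \<open>f\<close> and \<open>g\<close> in \<open>K(V)[x]\<close>, intersected with \<open>K[V \<union> {x}]\<close>;
  the factor \<open>c\<close> clears the denominators from \<open>K(V)\<close>.\<close>

definition ext_ideal ::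
    "'v set \<Rightarrow> 'v \<Rightarrow> ('v, 'a::comm_ring_1) mpoly \<Rightarrow> ('v, 'a) mpoly \<Rightarrow> ('v, 'a) mpoly set"
  where "ext_ideal V x f g = {t. vars t \<subseteq> insert x V \<and> (\<exists>c a b. c \<noteq> 0 \<and> vars c \<subseteq> V \<and>
     vars a \<subseteq> insert x V \<and> vars b \<subseteq> insert x V \<and> c * t = a * f + b * g)}"

context
  fixes V :: "'v::{finite,linorder} set" and x :: 'v and f g :: "('v, 'a::field) mpoly"
begin

lemma ext_ideal_generators:
  assumes "vars f \<subseteq> insert x V" "vars g \<subseteq> insert x V"
  shows "f \<in> ext_ideal V x f g" "g \<in> ext_ideal V x f g"
proof -
  have "1 * f = 1 * f + 0 * g"
    by simp
  then show "f \<in> ext_ideal V x f g"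
    using assms unfolding ext_ideal_def
    by (intro CollectI conjI exI[of _ 1] exI[of _ 1] exI[of _ 0]) auto
  have "1 * g = 0 * f + 1 * g"
    by simp
  then show "g \<in> ext_ideal V x f g"
    using assms unfolding ext_ideal_def
    by (intro CollectI conjI exI[of _ 1] exI[of _ 0] exI[of _ 1]) auto
qed

lemma ext_ideal_mult:
  assumes "t \<in> ext_ideal V x f g" "vars m \<subseteq> insert x V"
  shows "m * t \<in> ext_ideal V x f g"
proof -
  obtain c a b where cab: "c \<noteq> 0" "vars c \<subseteq> V" "vars a \<subseteq> insert x V" "vars b \<subseteq> insert x V"
      "c * t = a * f + b * g" and "vars t \<subseteq> insert x V"
    using assms(1) unfolding ext_ideal_def by blast
  have "c * (m * t) = m * (c * t)"
    by (simp add: algebra_simps)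
  also have "\<dots> = (m * a) * f + (m * b) * g"
    unfolding cab(5) by (simp add: algebra_simps)
  finally have "c * (m * t) = (m * a) * f + (m * b) * g" .
  then show ?thesis
    unfolding ext_ideal_def using cab assms(2) \<open>vars t \<subseteq> insert x V\<close>
    by (intro CollectI conjI exI[of _ c] exI[of _ "m * a"] exI[of _ "m * b"] vars_mult_subset)
qed

lemma ext_ideal_diff:
  assumes "t \<in> ext_ideal V x f g" "u \<in> ext_ideal V x f g"
  shows "t - u \<in> ext_ideal V x f g"
proof -
  obtain c a b where t: "c \<noteq> 0" "vars c \<subseteq> V" "vars a \<subseteq> insert x V" "vars b \<subseteq> insert x V"
      "c * t = a * f + b * g" "vars t \<subseteq> insert x V"
    using assms(1) unfolding ext_ideal_def by blast
  obtain c' a' b' where u: "c' \<noteq> 0" "vars c' \<subseteq> V" "vars a' \<subseteq> insert x V" "vars b' \<subseteq> insert x V"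
      "c' * u = a' * f + b' * g" "vars u \<subseteq> insert x V"
    using assms(2) unfolding ext_ideal_def by blast
  have "(c * c') * (t - u) = c' * (c * t) - c * (c' * u)"
    by (simp add: algebra_simps)
  also have "\<dots> = (c' * a - c * a') * f + (c' * b - c * b') * g"
    unfolding t(5) u(5) by (simp add: algebra_simps)
  finally have "(c * c') * (t - u) = (c' * a - c * a') * f + (c' * b - c * b') * g" .
  moreover have "vars c \<subseteq> insert x V" "vars c' \<subseteq> insert x V"
    using t(2) u(2) by auto
  ultimately show ?thesis
    unfolding ext_ideal_def using t u
    by (intro CollectI conjI exI[of _ "c * c'"] exI[of _ "c' * a - c * a'"]
        exI[of _ "c' * b - c * b'"] vars_mult_subset vars_diff_subset) simp_all
qed

lemma ext_ideal_cancel_factor: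
  assumes "p * r \<in> ext_ideal V x f g" "p \<noteq> 0" "vars p \<subseteq> V" "vars r \<subseteq> insert x V"
  shows "r \<in> ext_ideal V x f g"
proof -
  obtain c a b where cab: "c \<noteq> 0" "vars c \<subseteq> V" "vars a \<subseteq> insert x V" "vars b \<subseteq> insert x V"
      "c * (p * r) = a * f + b * g"
    using assms(1) unfolding ext_ideal_def by blast
  then have "(c * p) * r = a * f + b * g"
    by (simp add: mult.assoc)
  then show ?thesis
    unfolding ext_ideal_def using cab assms(2-4)
    by (intro CollectI conjI exI[of _ "c * p"] exI[of _ a] exI[of _ b] vars_mult_subset) simp_all
qed

text \<open>Pseudo-division by \<open>r\<close> leaves a remainder in the ideal of smaller degree in \<open>x\<close>,
  which must therefore vanish.\<close>

lemma ext_ideal_min_degree_dvd: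
  assumes r: "r \<in> ext_ideal V x f g" "r \<noteq> 0"
    and min: "\<And>s. s \<in> ext_ideal V x f g \<Longrightarrow> s \<noteq> 0 \<Longrightarrow> degree_in x r \<le> degree_in x s"
    and t: "t \<in> ext_ideal V x f g"
  shows "\<exists>k q. lcoeff_in x r ^ k * t = q * r \<and> vars q \<subseteq> insert x V"
proof -
  have vars: "vars r \<subseteq> insert x V" "vars t \<subseteq> insert x V"
    using r(1) t unfolding ext_ideal_def by blast+
  obtain k q s where qs: "lcoeff_in x r ^ k * t = q * r + s"
      "s = 0 \<or> degree_in x s < degree_in x r" "vars q \<subseteq> insert x V"
    using pseudo_division_in[OF r(2) insertI1 vars] by blast
  have "vars (lcoeff_in x r ^ k) \<subseteq> insert x V"
    using vars(1) vars_lcoeff_in[of x r] by (intro vars_power_subset) blast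
  then have "lcoeff_in x r ^ k * t - q * r \<in> ext_ideal V x f g"
    using ext_ideal_diff ext_ideal_mult r(1) t qs(3) by blast
  then have "s \<in> ext_ideal V x f g"
    using qs(1) by (simp add: algebra_simps)
  then have "s = 0"
    using qs(2) min[of s] by linarith
  then show ?thesis
    using qs(1,3) by auto
qed

end

lemma ext_ideal_divisor_step:
  fixes f :: "('v::{finite,linorder}, 'a::field) mpoly"
  assumes prime_V: "irreducibles_prime_in (polys_in V :: ('v, 'a) mpoly set)" and "x \<notin> V"
    and "f \<noteq> 0" and r: "r \<in> ext_ideal V x f g" "r \<noteq> 0"
    and q: "vars q \<subseteq> insert x V" "p * c' * f = q * r"
    and p: "irreducible p" "vars p \<subseteq> V" and "c' \<noteq> 0"
  obtains q' r' where "r' \<in> ext_ideal V x f g" "r' \<noteq> 0" "degree_in x r' = degree_in x r"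
    "vars q' \<subseteq> insert x V" "c' * f = q' * r'"
proof -
  have "p \<noteq> 0"
    using p(1) by auto
  have vars_r: "vars r \<subseteq> insert x V"
    using r(1) unfolding ext_ideal_def by blast
  have "q * r = p * (c' * f)"
    using q(2) by (simp add: ac_simps)
  then have "p dvd q \<or> p dvd r"
    using gauss_lemma_in[OF prime_V \<open>x \<notin> V\<close> p q(1) vars_r] by simp
  then show thesis
  proof
    assume "p dvd q"
    then obtain q' where q': "q = p * q'"
      by (rule dvdE)
    then have "q \<noteq> 0"
      using q(2) \<open>f \<noteq> 0\<close> \<open>p \<noteq> 0\<close> \<open>c' \<noteq> 0\<close> by auto
    then have "vars q' \<subseteq> insert x V"
      using vars_dvd[of q' q] q' q(1) by auto
    moreover have "c' * f = q' * r"
      using q(2) q' \<open>p \<noteq> 0\<close> by (simp add: ac_simps)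
    ultimately show thesis
      using that r by blast
  next
    assume "p dvd r"
    then obtain r' where r': "r = p * r'"
      by (rule dvdE)
    then have "r' \<noteq> 0"
      using r(2) by auto
    have "vars r' \<subseteq> insert x V"
      using vars_dvd[of r' r] r' r(2) vars_r by auto
    then have "r' \<in> ext_ideal V x f g"
      using ext_ideal_cancel_factor r(1) r' \<open>p \<noteq> 0\<close> p(2) by blast
    moreover have "degree_in x r' = degree_in x r"
      using wdeg_mult[where w = "var_deg x", OF var_deg_add \<open>p \<noteq> 0\<close> \<open>r' \<noteq> 0\<close>] r'
        p(2) \<open>x \<notin> V\<close> notin_vars_iff[of x p] by auto
    moreover have "c' * f = q * r'"
      using q(2) r' \<open>p \<noteq> 0\<close> by (simp add: ac_simps)
    ultimately show thesis
      using that \<open>r' \<noteq> 0\<close> q(1) by blast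
  qed
qed

lemma ext_ideal_divisor:
  fixes f :: "('v::{finite,linorder}, 'a::field) mpoly"
  assumes prime_V: "irreducibles_prime_in (polys_in V :: ('v, 'a) mpoly set)" and "x \<notin> V"
    and "f \<noteq> 0"
  shows "r \<in> ext_ideal V x f g \<Longrightarrow> r \<noteq> 0 \<Longrightarrow> vars c \<subseteq> V \<Longrightarrow> c \<noteq> 0 \<Longrightarrow> vars q \<subseteq> insert x V
    \<Longrightarrow> c * f = q * r
    \<Longrightarrow> \<exists>r'\<in>ext_ideal V x f g. r' \<noteq> 0 \<and> degree_in x r' = degree_in x r \<and> r' dvd f"
proof (induction "total_degree c" arbitrary: c q r rule: less_induct)
  case less
  show ?case
  proof (cases "c dvd 1")
    case True
    have "r dvd c * f"
      using less.prems(6) by simp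
    then have "r dvd f"
      using True by (rule dvd_mult_unit_cancel[rotated])
    then show ?thesis
      using less.prems(1,2) by blast
  next
    case False
    obtain p c' where p: "irreducible p" "c = p * c'" "vars p \<subseteq> vars c" "vars c' \<subseteq> vars c"
        and smaller: "total_degree c' < total_degree c"
      using less.prems(4) False by (rule irreducible_factor_in_vars)
    have "c' \<noteq> 0" "vars p \<subseteq> V" "vars c' \<subseteq> V"
      using p less.prems(3,4) by auto
    then obtain q' r' where "r' \<in> ext_ideal V x f g" "r' \<noteq> 0" "degree_in x r' = degree_in x r"
        "vars q' \<subseteq> insert x V" "c' * f = q' * r'"
      using ext_ideal_divisor_step[OF prime_V \<open>x \<notin> V\<close> \<open>f \<noteq> 0\<close> less.prems(1,2,5) _ p(1)]
        less.prems(6) p(2) by blast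
    then show ?thesis
      using less.hyps[OF smaller] \<open>vars c' \<subseteq> V\<close> \<open>c' \<noteq> 0\<close> by metis
  qed
qed

text \<open>An element of least positive degree in \<open>x\<close> would, after removing its factors from
  \<open>K[V]\<close>, be associated to \<open>f\<close> and divide a multiple of \<open>g\<close> by an element of \<open>K[V]\<close>.\<close>

lemma ext_ideal_least_degree_free:
  fixes f :: "('v::{finite,linorder}, 'a::field) mpoly"
  assumes prime_V: "irreducibles_prime_in (polys_in V :: ('v, 'a) mpoly set)" and "x \<notin> V"
    and f: "irreducible f" "vars f \<subseteq> insert x V" "x \<in> vars f"
    and g: "vars g \<subseteq> insert x V" "\<not> f dvd g"
    and r: "r \<in> ext_ideal V x f g" "r \<noteq> 0"
    and least: "\<And>s. s \<in> ext_ideal V x f g \<Longrightarrow> s \<noteq> 0 \<Longrightarrow> degree_in x r \<le> degree_in x s"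
  shows "degree_in x r = 0"
proof (rule ccontr)
  assume "degree_in x r \<noteq> 0"
  note gens = ext_ideal_generators[OF f(2) g(1)]
  have "f \<noteq> 0"
    using f(1) by auto
  have vars_lc: "vars (lcoeff_in x s ^ k) \<subseteq> V" if "s \<in> ext_ideal V x f g" for s and k :: nat
    using that by (intro vars_power_subset vars_lcoeff_in_subset) (simp add: ext_ideal_def)
  obtain k q where kq: "lcoeff_in x r ^ k * f = q * r" "vars q \<subseteq> insert x V"
    using ext_ideal_min_degree_dvd[OF r least gens(1)] by blast
  have "lcoeff_in x r ^ k \<noteq> 0"
    using r(2) by simp
  then obtain r' where r': "r' \<in> ext_ideal V x f g" "r' \<noteq> 0" "degree_in x r' = degree_in x r"
      "r' dvd f"
    using ext_ideal_divisor[OF prime_V \<open>x \<notin> V\<close> \<open>f \<noteq> 0\<close> r vars_lc[OF r(1)] _ kq(2,1)] by blast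
  obtain u where u: "f = r' * u"
    using r'(4) by (rule dvdE)
  have "\<not> r' dvd 1"
    using wdeg_unit[where w = "var_deg x" and u = r', OF var_deg_add] r'(3)
      \<open>degree_in x r \<noteq> 0\<close> by auto
  then obtain u' where "1 = u * u'"
    using irreducibleD[OF f(1) u] by (blast elim: dvdE)
  then have "r' = f * u'"
    by (metis u mult.assoc mult_1_right)
  moreover obtain m q' where "lcoeff_in x r' ^ m * g = q' * r'"
    using ext_ideal_min_degree_dvd[OF r'(1,2) _ gens(2)] least r'(3) by metis
  ultimately have "f dvd lcoeff_in x r' ^ m * g"
    by (simp add: mult.assoc)
  moreover have "lcoeff_in x r' ^ m \<noteq> 0"
    using r'(2) by simp
  ultimately have "f dvd g"
    using irreducible_dvd_mult_cancel_in[OF prime_V \<open>x \<notin> V\<close> f vars_lc[OF r'(1)] _ g(1)] by blast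
  then show False
    using g(2) by contradiction
qed

lemma irreducible_dvd_mult_in_var:
  fixes f :: "('v::{finite,linorder}, 'a::field) mpoly"
  assumes prime_V: "irreducibles_prime_in (polys_in V :: ('v, 'a) mpoly set)" and "x \<notin> V"
    and f: "irreducible f" "vars f \<subseteq> insert x V" "x \<in> vars f"
    and gh: "vars g \<subseteq> insert x V" "vars h \<subseteq> insert x V" "f dvd g * h" "\<not> f dvd g"
  shows "f dvd h"
proof -
  have "f \<in> ext_ideal V x f g" "f \<noteq> 0"
    using ext_ideal_generators[OF f(2) gh(1)] f(1) by auto
  then obtain r where r: "r \<in> ext_ideal V x f g" "r \<noteq> 0"
    and least: "\<And>s. s \<in> ext_ideal V x f g \<Longrightarrow> s \<noteq> 0 \<Longrightarrow> degree_in x r \<le> degree_in x s"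
    using ex_has_least_nat[of "\<lambda>s. s \<in> ext_ideal V x f g \<and> s \<noteq> 0" f "degree_in x"] by blast
  have "degree_in x r = 0"
    using ext_ideal_least_degree_free[OF prime_V \<open>x \<notin> V\<close> f gh(1,4) r least] .
  moreover obtain c a b where cab: "c \<noteq> 0" "vars c \<subseteq> V" "c * r = a * f + b * g"
    and "vars r \<subseteq> insert x V"
    using r(1) unfolding ext_ideal_def by blast
  ultimately have "vars (c * r) \<subseteq> V"
    using notin_vars_iff[of x r] by (intro vars_mult_subset) auto
  moreover have "(c * r) * h = (a * h) * f + b * (g * h)"
    using cab(3) by (simp add: algebra_simps)
  then have "f dvd (c * r) * h"
    using gh(3) by (simp add: dvd_add)
  ultimately show ?thesis
    using irreducible_dvd_mult_cancel_in[OF prime_V \<open>x \<notin> V\<close> f] cab(1) r(2) gh(2) by simp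
qed

lemma irreducibles_prime_in_insert:
  fixes V :: "'v::{finite,linorder} set"
  assumes prime_V: "irreducibles_prime_in (polys_in V :: ('v, 'a::field) mpoly set)"
    and "x \<notin> V"
  shows "irreducibles_prime_in (polys_in (insert x V) :: ('v, 'a) mpoly set)"
  unfolding irreducibles_prime_in_def
proof (intro ballI impI)
  fix f g h :: "('v, 'a) mpoly"
  assume "f \<in> polys_in (insert x V)" "g \<in> polys_in (insert x V)" "h \<in> polys_in (insert x V)"
    and "irreducible f" "f dvd g * h"
  then show "f dvd g \<or> f dvd h"
    using gauss_lemma_in[OF prime_V \<open>x \<notin> V\<close>, of f g h]
      irreducible_dvd_mult_in_var[OF prime_V \<open>x \<notin> V\<close>, of f g h] by blast
qed

lemma irreducible_imp_prime_elem:
  fixes p :: "('v::{finite,linorder}, 'a::field) mpoly"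
  assumes "irreducible p"
  shows "prime_elem p"
proof -
  have "irreducibles_prime_in (polys_in V :: ('v, 'a) mpoly set)" if "finite V" for V
    using that
  proof (induction rule: finite_induct)
    case empty
    have "\<not> irreducible q" if "vars q \<subseteq> {}" for q :: "('v, 'a) mpoly"
    proof
      assume "irreducible q"
      moreover have "total_degree q = 0"
        using that by (auto simp: wdeg_eq_0_iff mdeg_eq_sum vars_def in_keys_iff)
      moreover have "q \<noteq> 0"
        using \<open>irreducible q\<close> by auto
      ultimately show False
        using total_degree_eq_0_imp_unit[of q] irreducible_not_unit[of q] by blast
    qed
    then show ?case
      unfolding irreducibles_prime_in_def by blast
  next
    case (insert x F)
    show ?case
      using irreducibles_prime_in_insert[OF insert.IH insert.hyps(2)] .
  qed
  from this[OF finite_UNIV] have "irreducibles_prime_in (UNIV :: ('v, 'a) mpoly set)"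
    by simp
  then show ?thesis
    using assms unfolding irreducibles_prime_in_def prime_elem_def irreducible_def by simp
qed

lemma dvd_mult_cancel_coprime:
  fixes a b c :: "('v::{finite,linorder}, 'a::field) mpoly"
  assumes coprime: "\<And>d. d dvd a \<Longrightarrow> d dvd b \<Longrightarrow> d dvd 1"
  shows "a dvd c * b \<Longrightarrow> a dvd c"
  using coprime
proof (induction "total_degree a" arbitrary: a c rule: less_induct)
  case less
  show ?case
  proof (cases "a = 0 \<or> a dvd 1")
    case True
    then show ?thesis
    proof
      assume "a = 0"
      then have "c = 0 \<or> b = 0"
        using less.prems(1) by simp
      then show ?thesis
        using less.prems(2)[of a] \<open>a = 0\<close> by auto
    qed (rule dvd_trans[OF _ one_dvd])
  next
    case False
    then obtain p a' where p: "irreducible p" "a = p * a'" "total_degree a' < total_degree a"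
      by (auto elim!: irreducible_factor_in_vars)
    then have "p dvd c * b"
      using less.prems(1) by (auto intro: dvd_trans[of p a])
    moreover have "\<not> p dvd b"
      using less.prems(2)[of p] p irreducible_not_unit by auto
    ultimately have "p dvd c"
      using prime_elem_dvd_multD[OF irreducible_imp_prime_elem[OF p(1)]] by blast
    then obtain c' where c': "c = p * c'"
      by (rule dvdE)
    have "p \<noteq> 0"
      using p(1) by auto
    then have "a' dvd c' * b"
      using less.prems(1) p(2) c' by (simp add: mult.assoc)
    moreover have "d dvd 1" if "d dvd a'" "d dvd b" for d
      using less.prems(2)[of d] dvd_mult[OF that(1), of p] that(2) p(2) by simp
    ultimately have "a' dvd c'"
      using less.hyps[OF p(3)] by blast
    then show ?thesis
      using p(2) c' by simp
  qed
qed

section \<open>Composition of differential operators\<close>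

abbreviation sub_indices :: "('v \<Rightarrow>\<^sub>0 nat) \<Rightarrow> ('v \<Rightarrow>\<^sub>0 nat) set" where
  "sub_indices J \<equiv> {I. \<forall>i. Poly_Mapping.lookup I i \<le> Poly_Mapping.lookup J i}"

lemma finite_sub_indices: "finite (sub_indices (J :: 'v::finite \<Rightarrow>\<^sub>0 nat))"
proof -
  have "Poly_Mapping.lookup ` sub_indices J \<subseteq> Pi\<^sub>E UNIV (\<lambda>i. {..Poly_Mapping.lookup J i})"
    by auto
  then have "finite (Poly_Mapping.lookup ` sub_indices J)"
    by (rule finite_subset) (simp add: finite_PiE)
  then show ?thesis
    by (rule finite_imageD) (auto intro!: inj_onI poly_mapping_eqI)
qed

lemma mdeg_diff_sub_index:
  "I \<in> sub_indices J \<Longrightarrow> mdeg (J - I) + mdeg I = mdeg (J :: 'v::finite \<Rightarrow>\<^sub>0 nat)"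
  by (simp add: mdeg_eq_sum lookup_minus sum.distrib[symmetric])

lemma commuting_derivations_add:
  "commuting_derivations der \<Longrightarrow> der i (a + b) = der i a + der i b"
  unfolding commuting_derivations_def is_derivation_def by blast

lemma dpow_add:
  assumes "\<And>i a b. der i (a + b) = der i a + der i b"
  shows "dpow der I (a + b) = dpow der I a + dpow der I b"
proof -
  have pow: "(der i ^^ n) (a + b) = (der i ^^ n) a + (der i ^^ n) b" for i n a b
    by (induction n) (simp_all add: assms)
  have "foldr (\<lambda>i. der i ^^ Poly_Mapping.lookup I i) xs (a + b)
      = foldr (\<lambda>i. der i ^^ Poly_Mapping.lookup I i) xs a
        + foldr (\<lambda>i. der i ^^ Poly_Mapping.lookup I i) xs b" for xs
    by (induction xs) (simp_all add: pow)
  then show ?thesis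
    unfolding dpow_def .
qed

lemma dpow_0_right:
  fixes der :: "'v::{finite,linorder} \<Rightarrow> 'a::ab_group_add \<Rightarrow> 'a"
  assumes "\<And>i a b. der i (a + b) = der i a + der i b"
  shows "dpow der I 0 = 0"
proof -
  have "dpow der I (0 + 0) = dpow der I 0 + dpow der I 0"
    by (rule dpow_add[OF assms])
  then show ?thesis
    by simp
qed

lemma dpow_0_left [simp]: "dpow der 0 b = b"
proof -
  have "foldr (\<lambda>i. id) xs b = b" for xs :: "'v list"
    by (induction xs) simp_all
  then show ?thesis
    by (simp add: dpow_def)
qed

definition comp_monomials :: "('v::{finite,linorder} \<Rightarrow> 'a::field \<Rightarrow> 'a) \<Rightarrow> 'a \<Rightarrow> 'a
    \<Rightarrow> ('v \<Rightarrow>\<^sub>0 nat) \<Rightarrow> ('v \<Rightarrow>\<^sub>0 nat) \<Rightarrow> ('v, 'a) mpoly"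
  where "comp_monomials der a b J K = (\<Sum>I\<in>sub_indices J.
     Poly_Mapping.single (J - I + K) (a * of_nat (mchoose J I) * dpow der I b))"

lemma op_comp_0 [simp]: "op_comp der 0 M = 0" "op_comp der L 0 = 0"
  by (simp_all add: op_comp_def)

lemma op_comp_eq_sum:
  "op_comp der L M = (\<Sum>J\<in>Poly_Mapping.keys L. \<Sum>K\<in>Poly_Mapping.keys M.
     comp_monomials der (Poly_Mapping.lookup L J) (Poly_Mapping.lookup M K) J K)"
  unfolding op_comp_def comp_monomials_def ..

lemma comp_monomials_add_left:
  "comp_monomials der (a + a') b J K = comp_monomials der a b J K + comp_monomials der a' b J K"
  unfolding comp_monomials_def
  by (simp add: sum.distrib[symmetric] single_add[symmetric] algebra_simps)

lemma comp_monomials_add_right: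
  assumes "\<And>i a b. der i (a + b) = der i a + der i b"
  shows "comp_monomials der a (b + b') J K
    = comp_monomials der a b J K + comp_monomials der a b' J K"
  unfolding comp_monomials_def
  by (simp add: dpow_add[OF assms] sum.distrib[symmetric] single_add[symmetric] algebra_simps)

lemma op_comp_eq_sum_superset:
  assumes add: "\<And>i a b. der i (a + b) = der i a + der i b"
    and "finite SL" "Poly_Mapping.keys L \<subseteq> SL" "finite SM" "Poly_Mapping.keys M \<subseteq> SM"
  shows "op_comp der L M = (\<Sum>J\<in>SL. \<Sum>K\<in>SM.
     comp_monomials der (Poly_Mapping.lookup L J) (Poly_Mapping.lookup M K) J K)"
proof -
  have "op_comp der L M = (\<Sum>J\<in>Poly_Mapping.keys L. \<Sum>K\<in>SM.
      comp_monomials der (Poly_Mapping.lookup L J) (Poly_Mapping.lookup M K) J K)"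
    unfolding op_comp_eq_sum using assms
    by (intro sum.cong refl sum.mono_neutral_left)
      (auto simp: in_keys_iff comp_monomials_def dpow_0_right)
  also have "\<dots> = (\<Sum>J\<in>SL. \<Sum>K\<in>SM.
      comp_monomials der (Poly_Mapping.lookup L J) (Poly_Mapping.lookup M K) J K)"
    using assms by (intro sum.mono_neutral_left) (auto simp: in_keys_iff comp_monomials_def)
  finally show ?thesis .
qed

lemma
  assumes add: "\<And>i a b. der i (a + b) = der i a + der i b"
  shows op_comp_add_left: "op_comp der (A + B) C = op_comp der A C + op_comp der B C"
    and op_comp_add_right: "op_comp der C (A + B) = op_comp der C A + op_comp der C B"
proof -
  define S where "S = Poly_Mapping.keys A \<union> Poly_Mapping.keys B"
  have S: "finite S" "Poly_Mapping.keys A \<subseteq> S" "Poly_Mapping.keys B \<subseteq> S"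
      "Poly_Mapping.keys (A + B) \<subseteq> S"
    using keys_add[of A B] by (auto simp: S_def)
  note expand = op_comp_eq_sum_superset[OF add]
  show "op_comp der (A + B) C = op_comp der A C + op_comp der B C"
    unfolding expand[OF S(1,4) finite_keys subset_refl] expand[OF S(1,2) finite_keys subset_refl]
      expand[OF S(1,3) finite_keys subset_refl]
    by (simp add: lookup_add comp_monomials_add_left sum.distrib)
  show "op_comp der C (A + B) = op_comp der C A + op_comp der C B"
    unfolding expand[OF finite_keys subset_refl S(1,4)] expand[OF finite_keys subset_refl S(1,2)]
      expand[OF finite_keys subset_refl S(1,3)]
    by (simp add: lookup_add comp_monomials_add_right[OF add] sum.distrib)
qed

lemma mult_eq_sum:
  "A * B = (\<Sum>J\<in>Poly_Mapping.keys A. \<Sum>K\<in>Poly_Mapping.keys B.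
     Poly_Mapping.single (J + K) (Poly_Mapping.lookup A J * Poly_Mapping.lookup B K))"
proof -
  have "A * B = (\<Sum>J\<in>Poly_Mapping.keys A. Poly_Mapping.single J (Poly_Mapping.lookup A J))
      * (\<Sum>K\<in>Poly_Mapping.keys B. Poly_Mapping.single K (Poly_Mapping.lookup B K))"
    by (simp only: sum_single_lookup)
  also have "\<dots> = (\<Sum>J\<in>Poly_Mapping.keys A. \<Sum>K\<in>Poly_Mapping.keys B.
      Poly_Mapping.single J (Poly_Mapping.lookup A J)
        * Poly_Mapping.single K (Poly_Mapping.lookup B K))"
    by (rule sum_product)
  finally show ?thesis
    by (simp add: mult_single)
qed

text \<open>The summand \<open>I = 0\<close> of the Leibniz rule gives the product of the coefficient maps;
  all other summands have lower order.\<close>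

lemma op_comp_eq_mult_plus_lower:
  fixes A B :: "('v::{finite,linorder}, 'a::field) mpoly"
  obtains R where "op_comp der A B = A * B + R"
    "\<And>K. K \<in> Poly_Mapping.keys R \<Longrightarrow> mdeg K < total_degree A + total_degree B"
proof
  define R where "R = (\<Sum>J\<in>Poly_Mapping.keys A. \<Sum>K\<in>Poly_Mapping.keys B. \<Sum>I\<in>sub_indices J - {0}.
    Poly_Mapping.single (J - I + K)
      (Poly_Mapping.lookup A J * of_nat (mchoose J I) * dpow der I (Poly_Mapping.lookup B K)))"
  have "comp_monomials der a b J K = Poly_Mapping.single (J + K) (a * b) + (\<Sum>I\<in>sub_indices J - {0}.
      Poly_Mapping.single (J - I + K) (a * of_nat (mchoose J I) * dpow der I b))" for a b J K
    unfolding comp_monomials_def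
    by (simp add: sum.remove[OF finite_sub_indices, of 0] mchoose_def)
  then show "op_comp der A B = A * B + R"
    unfolding op_comp_eq_sum mult_eq_sum R_def by (simp add: sum.distrib)
  have keys_sum_subset: "Poly_Mapping.keys (sum f X) \<subseteq> S"
    if "\<And>i. i \<in> X \<Longrightarrow> Poly_Mapping.keys (f i) \<subseteq> S" for f :: "('v \<Rightarrow>\<^sub>0 nat) \<Rightarrow> ('v, 'a) mpoly" and X S
    using that keys_sum[of f X] by blast
  have "Poly_Mapping.keys R \<subseteq> {K'. mdeg K' < total_degree A + total_degree B}"
    unfolding R_def
  proof (intro keys_sum_subset)
    fix J K I
    assume JKI: "J \<in> Poly_Mapping.keys A" "K \<in> Poly_Mapping.keys B" "I \<in> sub_indices J - {0}"
    then have "0 < mdeg I"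
      using mdeg_eq_0_iff[of I] by simp
    then have "mdeg (J - I + K) < total_degree A + total_degree B"
      using mdeg_diff_sub_index[of I J] JKI le_wdeg[OF JKI(1), of mdeg] le_wdeg[OF JKI(2), of mdeg]
      by (simp add: mdeg_add)
    then show "Poly_Mapping.keys (Poly_Mapping.single (J - I + K)
        (Poly_Mapping.lookup A J * of_nat (mchoose J I) * dpow der I (Poly_Mapping.lookup B K)))
        \<subseteq> {K'. mdeg K' < total_degree A + total_degree B}"
      by simp
  qed
  then show "mdeg K < total_degree A + total_degree B" if "K \<in> Poly_Mapping.keys R" for K
    using that by blast
qed

lemma Sym_eq_wtop: "Sym L = wtop mdeg L"
proof (rule poly_mapping_eqI)
  fix J
  have "finite {J. (if ereal (real (mdeg J)) = ord L then Poly_Mapping.lookup L J else 0) \<noteq> 0}"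
    by (rule finite_subset[of _ "Poly_Mapping.keys L"]) (auto simp: in_keys_iff split: if_splits)
  then have "Poly_Mapping.lookup (Sym L) J
      = (if ereal (real (mdeg J)) = ord L then Poly_Mapping.lookup L J else 0)"
    unfolding Sym_def by simp
  also have "\<dots> = Poly_Mapping.lookup (wtop mdeg L) J"
    by (cases "L = 0") (simp_all add: ord_def wdeg_def lookup_wtop)
  finally show "Poly_Mapping.lookup (Sym L) J = Poly_Mapping.lookup (wtop mdeg L) J" .
qed

lemma ord_eq_total_degree: "L \<noteq> 0 \<Longrightarrow> ord L = ereal (real (total_degree L))"
  by (simp add: ord_def wdeg_def)

lemma ord_less_iff: "ord L < ereal (real n) \<longleftrightarrow> (\<forall>K\<in>Poly_Mapping.keys L. mdeg K < n)"
proof (cases "L = 0")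
  case False
  then show ?thesis
    using le_wdeg[of _ L mdeg] wdeg_less[OF False, of mdeg n] by (force simp: ord_eq_total_degree)
qed (simp add: ord_def)

lemma ord_diff_less:
  "ord p < ereal (real n) \<Longrightarrow> ord q < ereal (real n) \<Longrightarrow> ord (p - q) < ereal (real n)"
  using keys_diff[of p q] by (auto simp: ord_less_iff)

lemma homogeneousD:
  assumes "homogeneous P k"
  shows "P \<noteq> 0" "total_degree P = k" "wtop mdeg P = P"
proof -
  show "P \<noteq> 0"
    using assms by (simp add: homogeneous_def)
  then obtain J where "J \<in> Poly_Mapping.keys P" "mdeg J = total_degree P"
    by (rule wdeg_attained)
  then show deg: "total_degree P = k"
    using assms by (simp add: homogeneous_def)
  show "wtop mdeg P = P"
    using assms by (intro wtop_eq_self) (simp add: homogeneous_def deg)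
qed

lemma
  fixes A B :: "('v::{finite,linorder}, 'a::field) mpoly"
  assumes "A \<noteq> 0" "B \<noteq> 0"
  shows Sym_op_comp: "Sym (op_comp der A B) = Sym A * Sym B"
    and op_comp_nonzero: "op_comp der A B \<noteq> 0"
proof -
  obtain R where R: "op_comp der A B = A * B + R"
      "\<And>K. K \<in> Poly_Mapping.keys R \<Longrightarrow> mdeg K < total_degree A + total_degree B"
    using op_comp_eq_mult_plus_lower[of der A B] by blast
  have "A * B \<noteq> 0"
    using assms by simp
  moreover have "\<And>K. K \<in> Poly_Mapping.keys R \<Longrightarrow> mdeg K < total_degree (A * B)"
    using R(2) wdeg_mult[OF mdeg_add assms] by simp
  ultimately show "Sym (op_comp der A B) = Sym A * Sym B"
    unfolding Sym_eq_wtop R(1) wtop_mult[OF mdeg_add assms, symmetric] by (rule wtop_add_lower)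
  then show "op_comp der A B \<noteq> 0"
    using assms by (auto simp: Sym_eq_wtop)
qed

section \<open>Uniqueness of extensions\<close>

lemma is_gcd_cofactors_coprime:
  fixes S0 A B :: "('v::{finite,linorder}, 'a::field) mpoly"
  assumes "is_gcd S0 (S0 * A) (S0 * B)" "S0 \<noteq> 0" "d dvd A" "d dvd B"
  shows "d dvd 1"
proof -
  have "S0 * d dvd S0"
    using assms(1,3,4) unfolding is_gcd_def by (simp add: mult_dvd_mono)
  then obtain k where "S0 = S0 * d * k"
    by (rule dvdE)
  then have "S0 * 1 = S0 * (d * k)"
    by (simp add: mult.assoc)
  then have "1 = d * k"
    using assms(2) by simp
  then show ?thesis
    by (rule dvdI)
qed

lemma Sym_eq_0_iff [simp]: "Sym (L :: ('v, 'a::zero) mpoly) = 0 \<longleftrightarrow> L = 0"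
  by (simp add: Sym_eq_wtop)

lemma cofactor_dvd_Sym:
  fixes P1 P2 G2 H1 S0 A B :: "('v::{finite,linorder}, 'a::field) mpoly"
  assumes comp: "op_comp der P1 G2 = - op_comp der H1 P2"
    and sym: "Sym G2 = S0 * B" "Sym H1 = S0 * A"
    and nonzero: "S0 \<noteq> 0" "P1 \<noteq> 0" "P2 \<noteq> 0" "G2 \<noteq> 0" "H1 \<noteq> 0"
    and coprime: "\<And>d. d dvd A \<Longrightarrow> d dvd B \<Longrightarrow> d dvd 1"
  shows "A dvd Sym P1"
proof -
  have "S0 * (Sym P1 * B) = Sym (op_comp der P1 G2)"
    using Sym_op_comp[OF nonzero(2,4)] sym(1) by (simp add: ac_simps)
  also have "\<dots> = S0 * (A * - Sym P2)"
    using Sym_op_comp[OF nonzero(5,3)] sym(2) by (simp add: comp Sym_eq_wtop wtop_uminus ac_simps)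
  finally have "Sym P1 * B = A * - Sym P2"
    using nonzero(1) mult_left_cancel by blast
  then have "A dvd Sym P1 * B"
    by (rule dvdI)
  then show ?thesis
    using coprime dvd_mult_cancel_coprime by blast
qed

lemma op_comp_factorization_unique:
  fixes G1 G2 H1 H2 S0 A B :: "('v::{finite,linorder}, 'a::field) mpoly"
  assumes add: "\<And>i a b. der i (a + b) = der i a + der i b"
    and comp: "op_comp der G1 G2 = op_comp der H1 H2"
    and sym: "Sym G1 = S0 * A" "Sym H1 = S0 * A" "Sym G2 = S0 * B" "Sym H2 = S0 * B"
    and nonzero: "S0 * A \<noteq> 0" "S0 * B \<noteq> 0"
    and coprime: "\<And>d. d dvd A \<Longrightarrow> d dvd B \<Longrightarrow> d dvd 1"
    and close: "ord (G1 - H1) < ereal (real (total_degree A))"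
  shows "G1 = H1 \<and> G2 = H2"
proof -
  define P1 P2 where "P1 = G1 - H1" and "P2 = G2 - H2"
  have "G2 \<noteq> 0" "H1 \<noteq> 0" "S0 \<noteq> 0"
    using sym(2,3) nonzero by (auto simp: Sym_eq_wtop)
  have "op_comp der G1 G2 = op_comp der (P1 + H1) G2"
    by (simp add: P1_def)
  also have "\<dots> = op_comp der P1 G2 + op_comp der H1 (P2 + H2)"
    by (simp add: op_comp_add_left[OF add] P2_def)
  also have "\<dots> = op_comp der P1 G2 + op_comp der H1 P2 + op_comp der H1 H2"
    by (simp add: op_comp_add_right[OF add] add.assoc)
  finally have diff: "op_comp der P1 G2 = - op_comp der H1 P2"
    using comp by (simp add: eq_neg_iff_add_eq_0)
  have "P1 = 0"
  proof (rule ccontr)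
    assume "P1 \<noteq> 0"
    then have "P2 \<noteq> 0"
      using diff op_comp_nonzero[OF \<open>P1 \<noteq> 0\<close> \<open>G2 \<noteq> 0\<close>] by auto
    then have "A dvd Sym P1"
      using cofactor_dvd_Sym[OF diff sym(3,2)] \<open>S0 \<noteq> 0\<close> \<open>P1 \<noteq> 0\<close> \<open>G2 \<noteq> 0\<close> \<open>H1 \<noteq> 0\<close> coprime
      by blast
    then have "total_degree A \<le> total_degree (Sym P1)"
      using \<open>P1 \<noteq> 0\<close> by (intro wdeg_dvd[OF mdeg_add]) simp_all
    moreover have "total_degree (Sym P1) < total_degree A"
      using close \<open>P1 \<noteq> 0\<close> by (simp add: P1_def Sym_eq_wtop ord_eq_total_degree)
    ultimately show False
      by simp
  qed
  then have "P2 = 0"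
    using diff op_comp_nonzero[OF \<open>H1 \<noteq> 0\<close>] by fastforce
  with \<open>P1 = 0\<close> show ?thesis
    by (simp add: P1_def P2_def)
qed

lemma order_bound_eq_cofactor_degree:
  fixes L S0 S1 S2 A :: "('v::{finite,linorder}, 'a::field) mpoly"
  assumes "L \<noteq> 0" "ord L = ereal (real d)" "Sym L = S1 * S2"
    and "homogeneous S0 d0" "homogeneous S1 d1" "homogeneous S2 d2" "S1 = S0 * A"
  shows "(d - d0) - (d - d1) = total_degree A"
proof -
  note S0 = homogeneousD[OF assms(4)] and S1 = homogeneousD[OF assms(5)]
    and S2 = homogeneousD[OF assms(6)]
  have "d = total_degree (Sym L)"
    using assms(2) ord_eq_total_degree[OF assms(1)] by (simp add: Sym_eq_wtop)
  then have "d = d1 + d2"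
    using assms(3) wdeg_mult[OF mdeg_add S1(1) S2(1)] S1(2) S2(2) by simp
  moreover have "d1 = d0 + total_degree A"
    using wdeg_mult[OF mdeg_add, of S0 A] S0(1,2) S1(1,2) assms(7) by auto
  ultimately show ?thesis
    by simp
qed

theorem mainTheorem1:
  fixes der :: "'v::{finite,linorder} \<Rightarrow> 'a::field \<Rightarrow> 'a"
    and L F1 F2 S0 S1 S2 :: "('v, 'a) mpoly"
    and d d0 d1 d2 :: nat
  assumes "commuting_derivations der"
    and "L \<noteq> 0" and "ord L = ereal (real d)"
    and "Sym L = S1 * S2"
    and "homogeneous S1 d1" and "homogeneous S2 d2"
    and "is_gcd S0 S1 S2" and "homogeneous S0 d0"
    and "ord (L - op_comp der F1 F2) < ereal (real (d - d0))"
    and "Sym F1 = S1" and "Sym F2 = S2"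
  shows "\<forall>G1 G2 H1 H2.
     (L = op_comp der G1 G2 \<and> Sym G1 = S1 \<and> Sym G2 = S2 \<and>
      ord (F1 - G1) < ereal (real ((d - d0) - (d - d1))) \<and>
      ord (F2 - G2) < ereal (real ((d - d0) - (d - d2)))) \<and>
     (L = op_comp der H1 H2 \<and> Sym H1 = S1 \<and> Sym H2 = S2 \<and>
      ord (F1 - H1) < ereal (real ((d - d0) - (d - d1))) \<and>
      ord (F2 - H2) < ereal (real ((d - d0) - (d - d2))))
     \<longrightarrow> G1 = H1 \<and> G2 = H2"
proof (intro allI impI, elim conjE)
  fix G1 G2 H1 H2
  assume G: "L = op_comp der G1 G2" "Sym G1 = S1" "Sym G2 = S2"
      "ord (F1 - G1) < ereal (real ((d - d0) - (d - d1)))"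
    and H: "L = op_comp der H1 H2" "Sym H1 = S1" "Sym H2 = S2"
      "ord (F1 - H1) < ereal (real ((d - d0) - (d - d1)))"
  obtain A B where A: "S1 = S0 * A" and B: "S2 = S0 * B"
    using \<open>is_gcd S0 S1 S2\<close> unfolding is_gcd_def by (auto elim!: dvdE)
  have "(d - d0) - (d - d1) = total_degree A"
    using order_bound_eq_cofactor_degree assms(2-6,8) A by blast
  then have "ord (G1 - H1) < ereal (real (total_degree A))"
    using ord_diff_less[OF H(4) G(4)] by simp
  moreover have "\<And>e. e dvd A \<Longrightarrow> e dvd B \<Longrightarrow> e dvd 1"
    using is_gcd_cofactors_coprime \<open>is_gcd S0 S1 S2\<close> homogeneousD(1)[OF assms(8)] A B by blast
  moreover have "der i (a + b) = der i a + der i b" for i a b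
    using \<open>commuting_derivations der\<close> by (rule commuting_derivations_add)
  ultimately show "G1 = H1 \<and> G2 = H2"
    using op_comp_factorization_unique[where der = der] G H A B
      homogeneousD(1)[OF assms(5)] homogeneousD(1)[OF assms(6)] by metis
qed

end
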